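(* Let $D$ be a discrete probability distribution over a set $T$. Let $\rho$ be a mixed memory over a set $Y$ of program variables, and let $X\subseteq Y$ be a list of program variables of type $T$. Let $\rho_D:=\sum_{i\in T}D(i)|i\rangle\langle i|$, a mixed memory over $X$. Let $\mathbf{e}$ be a fresh entangled ghost variable of type $T$ and define the predicate $\mathrm{distr}(X,D) := \big(X\mathbf{e}=_q \psi^{(2)}_D\big)$ where $\psi^{(2)}_D := \sum_{i\in T}\sqrt{D(i)}\,|i\rangle\otimes|i\rangle$. Then the following are equivalent: (a) $\rho\models\mathrm{distr}(X,D)$; (b) there exists a mixed memory $\rho'$ over $Y\setminus X$ with $\rho=\rho'\otimes\rho_D$.
   Context: Variables have types and are of three disjoint kinds: program variables, entangled ghosts, unentangled ghosts. $\ell^2[V]$ is the Hilbert space with orthonormal basis indexed by assignments on $V$, identified with $\ell^2(T)$ when $V$ has type $T$; $\ell^2[V\cup W]\cong\ell^2[V]\otimes\ell^2[W]$. Mixed memories over $V$ are positive trace-class operators on $\ell^2[V]$; $\mathrm{tr}_W$ is partial trace. A mixed memory over $V\cup W$ is $(V,W)$-separable if it is a convergent sum $\sum_i\rho_i\otimes\rho_i'$ of mixed memories over $V$ and $W$. $\mathrm{supp}\,\rho$ is the closure of the range of $\rho$. A predicate over $V$ is a closed subspace of $\ell^2[V]$; for $W\subseteq V$, $(W=_q\psi):=\mathrm{span}\{\psi\}\otimes\ell^2[V\setminus W]$; predicates over different variable sets are identified if they agree after tensoring with the full spaces of missing variables. For program variables $X$, entangled ghosts $E$, unentangled ghosts $U$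 and a predicate $A$ over $X\cup E\cup U$, a mixed memory $\rho$ over $X$ satisfies $A$ ($\rho\models A$) iff there exists an $(X\cup E,U)$-separable mixed memory $\rho^\circ$ over $X\cup E\cup U$ with $\mathrm{supp}\,\rho^\circ\subseteq A$ and $\mathrm{tr}_{E\cup U}\rho^\circ=\rho$ (independent of the choice of $E,U$ containing the ghosts $A$ depends on). *)

theory Defs
  imports "HOL-Analysis.Analysis" "HOL-Probability.Probability_Mass_Function"
begin

text \<open>Vectors in \<open>\<ell>\<^sup>2('a)\<close> are represented as functions \<open>'a \<Rightarrow> complex\<close>
  that are square summable; (bounded) operators on \<open>\<ell>\<^sup>2('a)\<close> are represented by
  their matrix kernels \<open>\<rho> a b = \<langle>a|\<rho>|b\<rangle>\<close>.\<close>

definition is_l2 :: "('a \<Rightarrow> complex) \<Rightarrow> bool" where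
  "is_l2 v \<longleftrightarrow> (\<lambda>a. (cmod (v a))\<^sup>2) summable_on UNIV"

definition l2norm :: "('a \<Rightarrow> complex) \<Rightarrow> real" where
  "l2norm v = sqrt (\<Sum>\<^sub>\<infinity>a. (cmod (v a))\<^sup>2)"

text \<open>Mixed memory = positive trace-class operator, i.e. a trace-norm convergent sum
  \<open>\<Sum>\<^sub>k |v\<^sub>k\<rangle>\<langle>v\<^sub>k|\<close> with \<open>\<Sum>\<^sub>k \<parallel>v\<^sub>k\<parallel>\<^sup>2 < \<infinity>\<close> (countably many terms; finite sums via zero terms).\<close>
definition mixed :: "('a \<Rightarrow> 'a \<Rightarrow> complex) \<Rightarrow> bool" where
  "mixed \<rho> \<longleftrightarrow> (\<exists>v :: nat \<Rightarrow> 'a \<Rightarrow> complex.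
      (\<forall>k. is_l2 (v k)) \<and> summable (\<lambda>k. (l2norm (v k))\<^sup>2) \<and>
      (\<forall>a b. (\<lambda>k. v k a * cnj (v k b)) sums \<rho> a b))"

definition op_apply :: "('a \<Rightarrow> 'b \<Rightarrow> complex) \<Rightarrow> ('b \<Rightarrow> complex) \<Rightarrow> ('a \<Rightarrow> complex)" where
  "op_apply \<rho> u = (\<lambda>a. \<Sum>\<^sub>\<infinity>b. \<rho> a b * u b)"

definition op_range :: "('a \<Rightarrow> 'a \<Rightarrow> complex) \<Rightarrow> ('a \<Rightarrow> complex) set" where
  "op_range \<rho> = {w. \<exists>u. is_l2 u \<and> w = op_apply \<rho> u}"

definition supp :: "('a \<Rightarrow> 'a \<Rightarrow> complex) \<Rightarrow> ('a \<Rightarrow> complex) set" where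
  "supp \<rho> = {w. is_l2 w \<and> (\<forall>\<epsilon>>0. \<exists>r\<in>op_range \<rho>. l2norm (\<lambda>a. w a - r a) < \<epsilon>)}"

definition tensor_op :: "('a \<Rightarrow> 'a \<Rightarrow> complex) \<Rightarrow> ('b \<Rightarrow> 'b \<Rightarrow> complex)
    \<Rightarrow> ('a \<times> 'b) \<Rightarrow> ('a \<times> 'b) \<Rightarrow> complex" where
  "tensor_op \<rho> \<sigma> = (\<lambda>p q. \<rho> (fst p) (fst q) * \<sigma> (snd p) (snd q))"

text \<open>\<open>(V,W)\<close>-separability of a mixed memory over \<open>V \<union> W\<close> (assignments \<open>'a \<times> 'b\<close>).\<close>
definition separable :: "(('a \<times> 'b) \<Rightarrow> ('a \<times> 'b) \<Rightarrow> complex) \<Rightarrow> bool" where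
  "separable \<rho> \<longleftrightarrow> (\<exists>(f :: nat \<Rightarrow> 'a \<Rightarrow> 'a \<Rightarrow> complex) (g :: nat \<Rightarrow> 'b \<Rightarrow> 'b \<Rightarrow> complex).
      (\<forall>i. mixed (f i) \<and> mixed (g i)) \<and>
      (\<forall>p q. (\<lambda>i. tensor_op (f i) (g i) p q) sums \<rho> p q))"

text \<open>Partial trace over the ghosts \<open>E \<union> U\<close>; memories over \<open>Y \<union> E \<union> U\<close> are laid out as
  \<open>((y, e), u)\<close>.\<close>
definition ptrace_EU :: "((('y \<times> 'e) \<times> 'u) \<Rightarrow> (('y \<times> 'e) \<times> 'u) \<Rightarrow> complex) \<Rightarrow> 'y \<Rightarrow> 'y \<Rightarrow> complex" where
  "ptrace_EU \<rho> = (\<lambda>y y'. \<Sum>\<^sub>\<infinity>(e, u). \<rho> ((y, e), u) ((y', e), u))"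

text \<open>A predicate over \<open>Y \<union> E\<close>, tensored with the full space \<open>\<ell>\<^sup>2[U]\<close>.\<close>
definition pred_ext_U :: "(('z) \<Rightarrow> complex) set \<Rightarrow> (('z \<times> 'u) \<Rightarrow> complex) set" where
  "pred_ext_U A = {w. is_l2 w \<and> (\<forall>u. (\<lambda>z. w (z, u)) \<in> A)}"

text \<open>Satisfaction \<open>\<rho> \<Turnstile> A\<close> for a mixed memory \<open>\<rho>\<close> over program variables \<open>Y\<close>
  (assignments \<open>'y\<close>), a predicate \<open>A\<close> over \<open>Y \<union> E\<close> with entangled ghosts \<open>E\<close>
  (assignments \<open>'e\<close>), and unentangled ghosts \<open>U\<close> (assignments \<open>'u\<close>).\<close>
definition models :: "'u itself \<Rightarrow> ('y \<Rightarrow> 'y \<Rightarrow> complex) \<Rightarrow> (('y \<times> 'e) \<Rightarrow> complex) set \<Rightarrow> bool" where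
  "models _ \<rho> A \<longleftrightarrow> (\<exists>\<rho>c :: (('y \<times> 'e) \<times> 'u) \<Rightarrow> (('y \<times> 'e) \<times> 'u) \<Rightarrow> complex.
      mixed \<rho>c \<and> separable \<rho>c \<and> supp \<rho>c \<subseteq> pred_ext_U A \<and> ptrace_EU \<rho>c = \<rho>)"

definition rhoD :: "'t pmf \<Rightarrow> 't \<Rightarrow> 't \<Rightarrow> complex" where
  "rhoD D = (\<lambda>i j. if i = j then complex_of_real (pmf D i) else 0)"

definition psiD :: "'t pmf \<Rightarrow> ('t \<times> 't) \<Rightarrow> complex" where
  "psiD D = (\<lambda>(x, e). if x = e then complex_of_real (sqrt (pmf D x)) else 0)"

text \<open>\<open>distr(X,D) = (X e =\<^sub>q \<psi>\<^sup>(\<^sup>2\<^sup>)\<^sub>D) = span{\<psi>} \<otimes> \<ell>\<^sup>2[Y\<setminus>X]\<close>, as a predicate over \<open>Y \<union> {e}\<close>,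
  where assignments of \<open>Y\<close> are pairs \<open>(r, x)\<close> (\<open>r\<close> assigns \<open>Y\<setminus>X\<close>, \<open>x\<close> the value of \<open>X\<close>)
  and the full memory is \<open>((r, x), e)\<close>.\<close>
definition distr :: "'t pmf \<Rightarrow> ((('r \<times> 't) \<times> 't) \<Rightarrow> complex) set" where
  "distr D = {w. \<exists>\<phi>. is_l2 \<phi> \<and> (\<forall>r x e. w ((r, x), e) = \<phi> r * psiD D (x, e))}"

end

theory Submission
  imports Defs
begin

(* If \<rho> = \<rho>' \<otimes> \<rho>\<^sub>D, then \<rho> is the partial trace of the purification
   (\<rho>' \<otimes> |\<psi>\<^sub>D\<rangle>\<langle>\<psi>\<^sub>D|) \<otimes> |u\<^sub>0\<rangle>\<langle>u\<^sub>0|, a product state; every vector in its range has the form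
   \<phi> \<otimes> \<psi>\<^sub>D in the variables X e, and this pointwise condition survives the closure to the support.

   Conversely, if supp \<rho>\<degree> \<subseteq> distr(X,D), every column of \<rho>\<degree> lies in the support and hence factors
   through \<psi>\<^sub>D; by hermiticity so does every row.  Fixing x\<^sub>0 with D(x\<^sub>0) > 0, every entry of \<rho>\<degree> is
   \<psi>\<^sub>D(x,e) \<psi>\<^sub>D(x',e') / D(x\<^sub>0) times the corresponding entry of the (x\<^sub>0,x\<^sub>0)-block, and tracing out the
   ghosts gives \<rho> = \<rho>' \<otimes> \<rho>\<^sub>D with \<rho>' the x\<^sub>0-block of \<rho> divided by D(x\<^sub>0). *)

section \<open>Square-summable functions\<close>

lemma l2norm_nonneg: "0 \<le> l2norm f"
  by (simp add: l2norm_def infsum_nonneg)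

lemma l2norm_sq: "(l2norm f)\<^sup>2 = (\<Sum>\<^sub>\<infinity>a. (cmod (f a))\<^sup>2)"
  unfolding l2norm_def by (simp add: infsum_nonneg)

lemma sum_sq_le_l2norm_sq:
  assumes "is_l2 f" "finite F"
  shows "(\<Sum>a\<in>F. (cmod (f a))\<^sup>2) \<le> (l2norm f)\<^sup>2"
  unfolding l2norm_sq using assms unfolding is_l2_def
  by (intro finite_sum_le_infsum) auto

lemma norm_le_l2norm:
  assumes "is_l2 f"
  shows "cmod (f a) \<le> l2norm f"
proof (rule power2_le_imp_le)
  show "(cmod (f a))\<^sup>2 \<le> (l2norm f)\<^sup>2"
    using sum_sq_le_l2norm_sq[OF assms, of "{a}"] by simp
qed (rule l2norm_nonneg)

lemma is_l2_finite_support: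
  assumes "finite {a. f a \<noteq> 0}"
  shows "is_l2 f"
proof -
  have "(\<lambda>a. (cmod (f a))\<^sup>2) summable_on {a. f a \<noteq> 0}"
    using assms by simp
  moreover have "(\<lambda>a. (cmod (f a))\<^sup>2) summable_on UNIV
      \<longleftrightarrow> (\<lambda>a. (cmod (f a))\<^sup>2) summable_on {a. f a \<noteq> 0}"
    by (intro summable_on_cong_neutral) auto
  ultimately show ?thesis
    unfolding is_l2_def by blast
qed

lemma is_l2_diff:
  assumes "is_l2 f" "is_l2 g"
  shows "is_l2 (\<lambda>a. f a - g a)"
proof -
  have bound: "(cmod (f a - g a))\<^sup>2 \<le> 2 * (cmod (f a))\<^sup>2 + 2 * (cmod (g a))\<^sup>2" for a
  proof -
    have "(cmod (f a - g a))\<^sup>2 \<le> (cmod (f a) + cmod (g a))\<^sup>2"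
      by (simp add: power_mono norm_triangle_ineq4)
    also have "\<dots> \<le> 2 * (cmod (f a))\<^sup>2 + 2 * (cmod (g a))\<^sup>2"
      by (simp add: power2_sum) (smt (verit) sum_squares_bound)
    finally show ?thesis .
  qed
  have "(\<lambda>a. 2 * (cmod (f a))\<^sup>2 + 2 * (cmod (g a))\<^sup>2) summable_on UNIV"
    using assms unfolding is_l2_def by (intro summable_on_add summable_on_cmult_right)
  then show ?thesis
    unfolding is_l2_def by (rule summable_on_comparison_test) (use bound in auto)
qed

lemma is_l2_mult_const:
  assumes "is_l2 f"
  shows "is_l2 (\<lambda>a. f a * c)"
  using summable_on_cmult_right[OF assms[unfolded is_l2_def], of "(cmod c)\<^sup>2"]
  unfolding is_l2_def by (simp add: norm_mult power_mult_distrib mult.commute)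

lemma is_l2_comp_inj:
  assumes "inj j" "is_l2 f"
  shows "is_l2 (f \<circ> j)" and "l2norm (f \<circ> j) \<le> l2norm f"
proof -
  have f: "(\<lambda>a. (cmod (f a))\<^sup>2) summable_on UNIV"
    using assms(2) unfolding is_l2_def .
  then have "(\<lambda>a. (cmod (f a))\<^sup>2) summable_on range j"
    by (rule summable_on_subset_banach) simp
  then show "is_l2 (f \<circ> j)"
    using assms(1) unfolding is_l2_def by (simp add: summable_on_reindex o_def)
  have "(\<Sum>\<^sub>\<infinity>a. (cmod ((f \<circ> j) a))\<^sup>2) = infsum (\<lambda>a. (cmod (f a))\<^sup>2) (range j)"
    using assms(1) by (simp add: infsum_reindex o_def)
  also have "\<dots> \<le> (\<Sum>\<^sub>\<infinity>a. (cmod (f a))\<^sup>2)"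
    using f by (intro infsum_mono_neutral summable_on_subset_banach[OF f]) auto
  finally show "l2norm (f \<circ> j) \<le> l2norm f"
    unfolding l2norm_def by simp
qed

lemma is_l2_tensor:
  assumes "is_l2 v" "is_l2 w"
  shows "is_l2 (\<lambda>p. v (fst p) * w (snd p))"
    and "l2norm (\<lambda>p. v (fst p) * w (snd p)) \<le> l2norm v * l2norm w"
proof -
  let ?g = "\<lambda>p. (cmod (v (fst p) * w (snd p)))\<^sup>2"
  have bound: "sum ?g F \<le> (l2norm v * l2norm w)\<^sup>2" if F: "finite F" for F
  proof -
    have "sum ?g F \<le> sum ?g (fst ` F \<times> snd ` F)"
      using F by (intro sum_mono2) force+
    also have "\<dots> = (\<Sum>a\<in>fst ` F. (cmod (v a))\<^sup>2) * (\<Sum>b\<in>snd ` F. (cmod (w b))\<^sup>2)"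
      by (simp add: sum_product sum.cartesian_product case_prod_beta norm_mult power_mult_distrib)
    also have "\<dots> \<le> (l2norm v)\<^sup>2 * (l2norm w)\<^sup>2"
      using F assms by (intro mult_mono sum_sq_le_l2norm_sq) (auto intro: sum_nonneg)
    finally show ?thesis by (simp add: power_mult_distrib)
  qed
  have g: "?g summable_on UNIV"
    by (rule nonneg_bdd_above_summable_on) (auto intro!: bdd_aboveI2 bound)
  then show "is_l2 (\<lambda>p. v (fst p) * w (snd p))"
    unfolding is_l2_def .
  have "l2norm (\<lambda>p. v (fst p) * w (snd p)) = sqrt (infsum ?g UNIV)"
    unfolding l2norm_def ..
  also have "\<dots> \<le> sqrt ((l2norm v * l2norm w)\<^sup>2)"
    using g bound by (intro real_sqrt_le_mono infsum_le_finite_sums)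
  also have "\<dots> = l2norm v * l2norm w"
    by (simp add: l2norm_nonneg)
  finally show "l2norm (\<lambda>p. v (fst p) * w (snd p)) \<le> l2norm v * l2norm w" .
qed

lemma is_l2_psiD: "is_l2 (psiD D)"
proof -
  have "pmf D summable_on UNIV"
    using pmf_abs_summable abs_summable_equivalent abs_summable_summable by blast
  moreover have "(cmod (psiD D (x, x)))\<^sup>2 = pmf D x" for x
    by (simp add: psiD_def)
  ultimately have "(\<lambda>p. (cmod (psiD D p))\<^sup>2) summable_on range (\<lambda>x. (x, x))"
    by (simp add: summable_on_reindex o_def inj_def)
  moreover have "psiD D p = 0" if "p \<notin> range (\<lambda>x. (x, x))" for p
    using that by (cases p) (simp add: psiD_def image_iff)
  then have "(\<lambda>p. (cmod (psiD D p))\<^sup>2) summable_on UNIV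
      \<longleftrightarrow> (\<lambda>p. (cmod (psiD D p))\<^sup>2) summable_on range (\<lambda>x. (x, x))"
    by (intro summable_on_cong_neutral) auto
  ultimately show ?thesis
    unfolding is_l2_def by blast
qed

definition selfbutter :: "('a \<Rightarrow> complex) \<Rightarrow> 'a \<Rightarrow> 'a \<Rightarrow> complex" where
  "selfbutter \<psi> = (\<lambda>a b. \<psi> a * cnj (\<psi> b))"

lemma l2norm_mult_const: "l2norm (\<lambda>a. f a * c) = cmod c * l2norm f"
proof -
  have "(\<Sum>\<^sub>\<infinity>a. (cmod (f a * c))\<^sup>2) = (cmod c)\<^sup>2 * (\<Sum>\<^sub>\<infinity>a. (cmod (f a))\<^sup>2)"
    by (simp add: norm_mult power_mult_distrib mult.commute infsum_cmult_right')
  then show ?thesis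
    unfolding l2norm_def by (simp add: real_sqrt_mult)
qed

lemma mixed_hermitian:
  assumes "mixed \<rho>"
  shows "\<rho> a b = cnj (\<rho> b a)"
proof -
  obtain v where v: "\<And>a b. (\<lambda>k. v k a * cnj (v k b)) sums \<rho> a b"
    using assms unfolding mixed_def by blast
  have "(\<lambda>k. cnj (v k b * cnj (v k a))) sums cnj (\<rho> b a)"
    using v[of b a] by (simp only: sums_cnj)
  then have "(\<lambda>k. v k a * cnj (v k b)) sums cnj (\<rho> b a)"
    by (simp add: mult.commute)
  then show ?thesis
    using v[of a b] sums_unique2 by blast
qed

lemma mixed_selfbutter:
  assumes "is_l2 \<psi>"
  shows "mixed (selfbutter \<psi>)"
  unfolding mixed_def
proof (intro exI[of _ "\<lambda>k a. if k = 0 then \<psi> a else 0"] conjI allI)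
  show "is_l2 (\<lambda>a. if k = 0 then \<psi> a else 0)" for k
    using assms by (cases "k = 0") (simp_all add: is_l2_def)
  show "summable (\<lambda>k. (l2norm (\<lambda>a. if k = 0 then \<psi> a else 0))\<^sup>2)"
    by (rule summable_finite[of "{0}"]) (auto simp: l2norm_def)
  show "(\<lambda>k. (if k = 0 then \<psi> a else 0) * cnj (if k = 0 then \<psi> b else 0)) sums selfbutter \<psi> a b"
    for a b
  proof -
    have eq: "(\<lambda>k. (if k = 0 then \<psi> a else 0) * cnj (if k = 0 then \<psi> b else 0))
        = (\<lambda>k. if k = 0 then selfbutter \<psi> a b else 0)"
      by (auto simp: selfbutter_def)
    show ?thesis
      unfolding eq by (rule sums_single)
  qed
qed

lemma mixed_zero: "mixed (\<lambda>_ _. 0)"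
  using mixed_selfbutter[of "\<lambda>_. 0"] by (simp add: selfbutter_def is_l2_def)

lemma mixed_comp_inj:
  assumes "inj j" "mixed \<rho>"
  shows "mixed (\<lambda>a b. \<rho> (j a) (j b))"
proof -
  obtain v where v1: "\<And>k. is_l2 (v k)" and v2: "summable (\<lambda>k. (l2norm (v k))\<^sup>2)"
    and v3: "\<And>a b. (\<lambda>k. v k a * cnj (v k b)) sums \<rho> a b"
    using assms(2) unfolding mixed_def by blast
  define w where "w k = v k \<circ> j" for k
  have "is_l2 (w k)" for k
    unfolding w_def using is_l2_comp_inj(1)[OF assms(1) v1] .
  moreover have "summable (\<lambda>k. (l2norm (w k))\<^sup>2)"
    by (rule summable_comparison_test'[OF v2, of 0])
      (simp add: w_def power_mono l2norm_nonneg is_l2_comp_inj(2)[OF assms(1) v1])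
  moreover have "(\<lambda>k. w k a * cnj (w k b)) sums \<rho> (j a) (j b)" for a b
    using v3 by (simp add: w_def)
  ultimately show ?thesis
    unfolding mixed_def by blast
qed

lemma mixed_scale:
  assumes "mixed \<rho>" "0 \<le> c"
  shows "mixed (\<lambda>a b. of_real c * \<rho> a b)"
proof -
  obtain v where v1: "\<And>k. is_l2 (v k)" and v2: "summable (\<lambda>k. (l2norm (v k))\<^sup>2)"
    and v3: "\<And>a b. (\<lambda>k. v k a * cnj (v k b)) sums \<rho> a b"
    using assms(1) unfolding mixed_def by blast
  define s where "s = complex_of_real (sqrt c)"
  define w where "w k = (\<lambda>a. v k a * s)" for k
  have "is_l2 (w k)" for k
    unfolding w_def using is_l2_mult_const[OF v1] .
  moreover have "summable (\<lambda>k. (l2norm (w k))\<^sup>2)"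
  proof -
    have "(l2norm (w k))\<^sup>2 = c * (l2norm (v k))\<^sup>2" for k
      using assms(2) by (simp add: w_def l2norm_mult_const s_def power_mult_distrib)
    then show ?thesis
      using summable_mult[OF v2, of c] by simp
  qed
  moreover have "(\<lambda>k. w k a * cnj (w k b)) sums (of_real c * \<rho> a b)" for a b
  proof -
    have "s * cnj s = of_real c"
      using assms(2) by (simp add: s_def of_real_mult[symmetric])
    then have "w k a * cnj (w k b) = of_real c * (v k a * cnj (v k b))" for k
      unfolding w_def by (metis complex_cnj_mult mult.assoc mult.commute mult.left_commute)
    then show ?thesis
      using sums_mult[OF v3[of a b], of "of_real c"] by simp
  qed
  ultimately show ?thesis
    unfolding mixed_def by blast
qed

lemma mixed_tensor_selfbutter:
  assumes "mixed \<rho>" "is_l2 \<psi>"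
  shows "mixed (tensor_op \<rho> (selfbutter \<psi>))"
proof -
  obtain v where v1: "\<And>k. is_l2 (v k)" and v2: "summable (\<lambda>k. (l2norm (v k))\<^sup>2)"
    and v3: "\<And>a b. (\<lambda>k. v k a * cnj (v k b)) sums \<rho> a b"
    using assms(1) unfolding mixed_def by blast
  define w where "w k p = v k (fst p) * \<psi> (snd p)" for k p
  have "is_l2 (w k)" for k
    unfolding w_def using is_l2_tensor(1)[OF v1 assms(2)] .
  moreover have "summable (\<lambda>k. (l2norm (w k))\<^sup>2)"
  proof (rule summable_comparison_test'[OF summable_mult[OF v2, of "(l2norm \<psi>)\<^sup>2"], of 0])
    fix k
    have "l2norm (w k) \<le> l2norm (v k) * l2norm \<psi>"
      unfolding w_def using is_l2_tensor(2)[OF v1 assms(2)] .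
    then have "(l2norm (w k))\<^sup>2 \<le> (l2norm (v k) * l2norm \<psi>)\<^sup>2"
      by (rule power_mono) (rule l2norm_nonneg)
    then show "norm ((l2norm (w k))\<^sup>2) \<le> (l2norm \<psi>)\<^sup>2 * (l2norm (v k))\<^sup>2"
      by (simp add: power_mult_distrib mult.commute)
  qed
  moreover have "(\<lambda>k. w k p * cnj (w k q)) sums tensor_op \<rho> (selfbutter \<psi>) p q" for p q
    using sums_mult2[OF v3[of "fst p" "fst q"], of "selfbutter \<psi> (snd p) (snd q)"]
    by (simp add: w_def tensor_op_def selfbutter_def algebra_simps)
  ultimately show ?thesis
    unfolding mixed_def by blast
qed

lemma separable_tensor_op:
  assumes "mixed f" "mixed g"
  shows "separable (tensor_op f g)"
  unfolding separable_def
proof (intro exI[of _ "\<lambda>i. if i = 0 then f else (\<lambda>_ _. 0)"]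
    exI[of _ "\<lambda>i. if i = 0 then g else (\<lambda>_ _. 0)"] conjI allI)
  show "mixed (if i = 0 then f else (\<lambda>_ _. 0))" "mixed (if i = 0 then g else (\<lambda>_ _. 0))"
    for i :: nat
    using assms by (simp_all add: mixed_zero)
  show "(\<lambda>i. tensor_op (if i = 0 then f else (\<lambda>_ _. 0)) (if i = 0 then g else (\<lambda>_ _. 0)) p q)
      sums tensor_op f g p q" for p q
  proof -
    have eq: "(\<lambda>i. tensor_op (if i = 0 then f else (\<lambda>_ _. 0)) (if i = 0 then g else (\<lambda>_ _. 0)) p q)
        = (\<lambda>i. if i = 0 then tensor_op f g p q else 0)"
      by (auto simp: tensor_op_def)
    show ?thesis
      unfolding eq by (rule sums_single)
  qed
qed

section \<open>Range and support\<close>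

lemma cmod_sum_mult_sq_le:
  "(cmod (\<Sum>k\<in>F. x k * y k))\<^sup>2 \<le> (\<Sum>k\<in>F. (cmod (x k))\<^sup>2) * (\<Sum>k\<in>F. (cmod (y k))\<^sup>2)"
proof -
  have "(cmod (\<Sum>k\<in>F. x k * y k))\<^sup>2 \<le> (\<Sum>k\<in>F. cmod (x k) * cmod (y k))\<^sup>2"
    using norm_sum[of "\<lambda>k. x k * y k" F] by (simp add: norm_mult power_mono)
  also have "\<dots> \<le> (\<Sum>k\<in>F. (cmod (x k))\<^sup>2) * (\<Sum>k\<in>F. (cmod (y k))\<^sup>2)"
    by (rule Cauchy_Schwarz_ineq_sum)
  finally show ?thesis .
qed

lemma cmod_sums_mult_sq_le:
  assumes "(\<lambda>k. x k * y k) sums s" "summable (\<lambda>k. (cmod (x k))\<^sup>2)" "summable (\<lambda>k. (cmod (y k))\<^sup>2)"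
  shows "(cmod s)\<^sup>2 \<le> (\<Sum>k. (cmod (x k))\<^sup>2) * (\<Sum>k. (cmod (y k))\<^sup>2)"
proof (rule LIMSEQ_le_const2)
  show "(\<lambda>n. (cmod (\<Sum>k<n. x k * y k))\<^sup>2) \<longlonglongrightarrow> (cmod s)\<^sup>2"
    using assms(1) unfolding sums_def by (intro tendsto_intros)
  have "(cmod (\<Sum>k<n. x k * y k))\<^sup>2 \<le> (\<Sum>k. (cmod (x k))\<^sup>2) * (\<Sum>k. (cmod (y k))\<^sup>2)" for n
  proof -
    have "(cmod (\<Sum>k<n. x k * y k))\<^sup>2 \<le> (\<Sum>k<n. (cmod (x k))\<^sup>2) * (\<Sum>k<n. (cmod (y k))\<^sup>2)"
      by (rule cmod_sum_mult_sq_le)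
    also have "\<dots> \<le> (\<Sum>k. (cmod (x k))\<^sup>2) * (\<Sum>k. (cmod (y k))\<^sup>2)"
      using assms(2,3)
      by (intro mult_mono sum_le_suminf suminf_nonneg sum_nonneg) auto
    finally show ?thesis .
  qed
  then show "\<exists>N. \<forall>n\<ge>N. (cmod (\<Sum>k<n. x k * y k))\<^sup>2 \<le> (\<Sum>k. (cmod (x k))\<^sup>2) * (\<Sum>k. (cmod (y k))\<^sup>2)"
    by blast
qed

lemma summable_cmod_sq_component:
  assumes "\<And>k. is_l2 (v k)" "summable (\<lambda>k. (l2norm (v k))\<^sup>2)"
  shows "summable (\<lambda>k. (cmod (v k a))\<^sup>2)"
  by (rule summable_comparison_test'[OF assms(2), of 0])
    (simp add: assms(1) norm_le_l2norm power_mono)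

lemma summable_on_suminf_cmod_sq:
  assumes v: "\<And>k. is_l2 (v k)" "summable (\<lambda>k. (l2norm (v k))\<^sup>2)"
  shows "(\<lambda>a. \<Sum>k. (cmod (v k a))\<^sup>2) summable_on UNIV"
proof (rule nonneg_bdd_above_summable_on)
  show "0 \<le> (\<Sum>k. (cmod (v k a))\<^sup>2)" for a
    using summable_cmod_sq_component[OF v] by (rule suminf_nonneg) auto
  have bound: "(\<Sum>a\<in>F. \<Sum>k. (cmod (v k a))\<^sup>2) \<le> (\<Sum>k. (l2norm (v k))\<^sup>2)"
    if F: "finite F" for F
  proof -
    have "(\<Sum>a\<in>F. \<Sum>k. (cmod (v k a))\<^sup>2) = (\<Sum>k. \<Sum>a\<in>F. (cmod (v k a))\<^sup>2)"
      using summable_cmod_sq_component[OF v] by (intro suminf_sum[symmetric])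
    also have "\<dots> \<le> (\<Sum>k. (l2norm (v k))\<^sup>2)"
      using summable_cmod_sq_component[OF v] sum_sq_le_l2norm_sq[OF v(1) F] v(2)
      by (intro suminf_le summable_sum) auto
    finally show ?thesis .
  qed
  then show "bdd_above (sum (\<lambda>a. \<Sum>k. (cmod (v k a))\<^sup>2) ` {F. F \<subseteq> UNIV \<and> finite F})"
    by (auto intro!: bdd_aboveI2 bound)
qed

text \<open>For a decomposition \<open>\<rho> = \<Sum>\<^sub>k |v\<^sub>k\<rangle>\<langle>v\<^sub>k|\<close> the two series in the bounds below are
  \<open>\<rho>(a,a)\<close> and \<open>tr \<rho>\<close>, so they read \<open>|(\<rho> u)(a)|\<^sup>2 \<le> \<rho>(a,a) \<cdot> tr \<rho> \<cdot> \<parallel>u\<parallel>\<^sup>2\<close>.\<close>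

lemma cmod_sum_kernel_sq_le:
  assumes v1: "\<And>k. is_l2 (v k)" and v2: "summable (\<lambda>k. (l2norm (v k))\<^sup>2)"
    and v3: "\<And>a b. (\<lambda>k. v k a * cnj (v k b)) sums \<rho> a b"
    and u: "is_l2 u" and F: "finite F"
  shows "(cmod (\<Sum>b\<in>F. \<rho> a b * u b))\<^sup>2
    \<le> (\<Sum>k. (cmod (v k a))\<^sup>2) * ((\<Sum>k. (l2norm (v k))\<^sup>2) * (l2norm u)\<^sup>2)"
proof -
  define y where "y k = (\<Sum>b\<in>F. cnj (v k b) * u b)" for k
  have y_sq: "(cmod (y k))\<^sup>2 \<le> (l2norm (v k))\<^sup>2 * (l2norm u)\<^sup>2" for k
  proof -
    have "(cmod (y k))\<^sup>2 \<le> (\<Sum>b\<in>F. (cmod (cnj (v k b)))\<^sup>2) * (\<Sum>b\<in>F. (cmod (u b))\<^sup>2)"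
      unfolding y_def by (rule cmod_sum_mult_sq_le)
    also have "\<dots> \<le> (l2norm (v k))\<^sup>2 * (l2norm u)\<^sup>2"
      using sum_sq_le_l2norm_sq[OF v1 F] sum_sq_le_l2norm_sq[OF u F]
      by (intro mult_mono) (auto intro: sum_nonneg)
    finally show ?thesis .
  qed
  have y_summable: "summable (\<lambda>k. (cmod (y k))\<^sup>2)"
    by (rule summable_comparison_test'[of "\<lambda>k. (l2norm (v k))\<^sup>2 * (l2norm u)\<^sup>2" 0])
      (use v2 y_sq in \<open>auto intro: summable_mult2\<close>)
  have "(\<lambda>k. \<Sum>b\<in>F. v k a * cnj (v k b) * u b) sums (\<Sum>b\<in>F. \<rho> a b * u b)"
    by (intro sums_sum sums_mult2 v3)
  then have "(\<lambda>k. v k a * y k) sums (\<Sum>b\<in>F. \<rho> a b * u b)"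
    unfolding y_def by (simp add: sum_distrib_left mult.assoc)
  then have "(cmod (\<Sum>b\<in>F. \<rho> a b * u b))\<^sup>2 \<le> (\<Sum>k. (cmod (v k a))\<^sup>2) * (\<Sum>k. (cmod (y k))\<^sup>2)"
    using summable_cmod_sq_component[OF v1 v2] y_summable by (rule cmod_sums_mult_sq_le)
  also have "\<dots> \<le> (\<Sum>k. (cmod (v k a))\<^sup>2) * ((\<Sum>k. (l2norm (v k))\<^sup>2) * (l2norm u)\<^sup>2)"
  proof (rule mult_left_mono)
    have "(\<Sum>k. (cmod (y k))\<^sup>2) \<le> (\<Sum>k. (l2norm (v k))\<^sup>2 * (l2norm u)\<^sup>2)"
      using y_summable v2 y_sq by (intro suminf_le) (auto intro: summable_mult2)
    also have "\<dots> = (\<Sum>k. (l2norm (v k))\<^sup>2) * (l2norm u)\<^sup>2"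
      using v2 by (rule suminf_mult2[symmetric])
    finally show "(\<Sum>k. (cmod (y k))\<^sup>2) \<le> (\<Sum>k. (l2norm (v k))\<^sup>2) * (l2norm u)\<^sup>2" .
    show "0 \<le> (\<Sum>k. (cmod (v k a))\<^sup>2)"
      using summable_cmod_sq_component[OF v1 v2] by (rule suminf_nonneg) auto
  qed
  finally show ?thesis .
qed

lemma cmod_op_apply_sq_le:
  assumes v1: "\<And>k. is_l2 (v k)" and v2: "summable (\<lambda>k. (l2norm (v k))\<^sup>2)"
    and v3: "\<And>a b. (\<lambda>k. v k a * cnj (v k b)) sums \<rho> a b"
    and u: "is_l2 u"
  shows "(cmod (op_apply \<rho> u a))\<^sup>2
    \<le> (\<Sum>k. (cmod (v k a))\<^sup>2) * ((\<Sum>k. (l2norm (v k))\<^sup>2) * (l2norm u)\<^sup>2)"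
    (is "_ \<le> ?B")
proof (cases "(\<lambda>b. \<rho> a b * u b) summable_on UNIV")
  case True
  then have "(sum (\<lambda>b. \<rho> a b * u b) \<longlongrightarrow> op_apply \<rho> u a) (finite_subsets_at_top UNIV)"
    unfolding op_apply_def by (simp add: has_sum_def[symmetric] has_sum_infsum)
  then have "((\<lambda>F. (cmod (sum (\<lambda>b. \<rho> a b * u b) F))\<^sup>2) \<longlongrightarrow> (cmod (op_apply \<rho> u a))\<^sup>2)
      (finite_subsets_at_top UNIV)"
    by (intro tendsto_intros)
  moreover have "\<forall>\<^sub>F F in finite_subsets_at_top UNIV. (cmod (sum (\<lambda>b. \<rho> a b * u b) F))\<^sup>2 \<le> ?B"
    using cmod_sum_kernel_sq_le[OF v1 v2 v3 u] by (simp add: eventually_finite_subsets_at_top_weakI)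
  ultimately show ?thesis
    by (intro tendsto_le[OF _ tendsto_const]) simp_all
next
  case False
  then have "op_apply \<rho> u a = 0"
    unfolding op_apply_def by (simp add: infsum_not_exists)
  moreover have "0 \<le> ?B"
    using summable_cmod_sq_component[OF v1 v2] v2
    by (intro mult_nonneg_nonneg suminf_nonneg) auto
  ultimately show ?thesis
    by simp
qed

lemma is_l2_op_apply:
  assumes "mixed \<rho>" "is_l2 u"
  shows "is_l2 (op_apply \<rho> u)"
proof -
  obtain v where v1: "\<And>k. is_l2 (v k)" and v2: "summable (\<lambda>k. (l2norm (v k))\<^sup>2)"
    and v3: "\<And>a b. (\<lambda>k. v k a * cnj (v k b)) sums \<rho> a b"
    using assms(1) unfolding mixed_def by blast
  have "(\<lambda>a. (\<Sum>k. (cmod (v k a))\<^sup>2) * ((\<Sum>k. (l2norm (v k))\<^sup>2) * (l2norm (u))\<^sup>2)) summable_on UNIV"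
    using summable_on_suminf_cmod_sq[OF v1 v2] by (rule summable_on_cmult_left)
  then show ?thesis
    unfolding is_l2_def
    by (rule summable_on_comparison_test) (use cmod_op_apply_sq_le[OF v1 v2 v3 assms(2)] in auto)
qed

lemma column_in_supp:
  assumes "mixed \<rho>"
  shows "(\<lambda>a. \<rho> a b) \<in> supp \<rho>"
proof -
  define \<delta> where "\<delta> b' = (if b' = b then 1 else 0 :: complex)" for b'
  have \<delta>: "is_l2 \<delta>"
    by (rule is_l2_finite_support) (simp add: \<delta>_def)
  have "op_apply \<rho> \<delta> a = \<rho> a b" for a
  proof -
    have "op_apply \<rho> \<delta> a = infsum (\<lambda>b'. \<rho> a b' * \<delta> b') {b}"
      unfolding op_apply_def by (rule infsum_cong_neutral) (auto simp: \<delta>_def)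
    then show ?thesis
      by (simp add: \<delta>_def)
  qed
  then have "op_apply \<rho> \<delta> = (\<lambda>a. \<rho> a b)"
    by auto
  then have "(\<lambda>a. \<rho> a b) \<in> op_range \<rho>" and "is_l2 (\<lambda>a. \<rho> a b)"
    using \<delta> is_l2_op_apply[OF assms \<delta>] unfolding op_range_def by auto
  then show ?thesis
    unfolding supp_def by (auto intro!: bexI[of _ "\<lambda>a. \<rho> a b"] simp: l2norm_def)
qed

lemma supp_approx_pointwise:
  assumes "mixed \<rho>" "w \<in> supp \<rho>" "0 < \<epsilon>"
  obtains m where "m \<in> op_range \<rho>" "\<And>a. cmod (w a - m a) < \<epsilon>"
proof -
  obtain m where m: "m \<in> op_range \<rho>" and close: "l2norm (\<lambda>a. w a - m a) < \<epsilon>"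
    using assms(2,3) unfolding supp_def by blast
  have "is_l2 (\<lambda>a. w a - m a)"
    using assms(1,2) m is_l2_op_apply unfolding supp_def op_range_def by (blast intro: is_l2_diff)
  then have "cmod (w a - m a) < \<epsilon>" for a
    using le_less_trans[OF norm_le_l2norm close] by simp
  with m show ?thesis
    using that by blast
qed

text \<open>Pointwise linear relations are closed in \<open>\<ell>\<^sup>2\<close>, since \<open>\<ell>\<^sup>2\<close>-convergence implies
  pointwise convergence.\<close>

lemma supp_preserves_relation:
  assumes "mixed \<rho>" "w \<in> supp \<rho>" and rel: "\<And>m. m \<in> op_range \<rho> \<Longrightarrow> m a * \<alpha> = m b * \<beta>"
  shows "w a * \<alpha> = w b * \<beta>"
proof -
  define M where "M = cmod \<alpha> + cmod \<beta>"
  have "cmod (w a * \<alpha> - w b * \<beta>) \<le> 0 + e" if e: "0 < e" for e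
  proof -
    define \<epsilon> where "\<epsilon> = e / (M + 1)"
    have "0 \<le> M"
      by (simp add: M_def)
    then have \<epsilon>: "0 < \<epsilon>"
      using e by (simp add: \<epsilon>_def)
    have "\<epsilon> * M \<le> \<epsilon> * (M + 1)"
      using \<epsilon> by simp
    also have "\<dots> = e"
      using \<open>0 \<le> M\<close> by (simp add: \<epsilon>_def)
    finally have \<epsilon>M: "\<epsilon> * M \<le> e" .
    obtain m where m: "m \<in> op_range \<rho>" and close: "\<And>x. cmod (w x - m x) < \<epsilon>"
      using supp_approx_pointwise[OF assms(1,2) \<epsilon>] by blast
    have "w a * \<alpha> - w b * \<beta> = (w a - m a) * \<alpha> - (w b - m b) * \<beta>"
      using rel[OF m] by (simp add: algebra_simps)
    then have "cmod (w a * \<alpha> - w b * \<beta>) \<le> cmod (w a - m a) * cmod \<alpha> + cmod (w b - m b) * cmod \<beta>"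
      by (metis norm_mult norm_triangle_ineq4)
    also have "\<dots> \<le> \<epsilon> * M"
      using close[of a] close[of b]
      by (simp add: M_def distrib_left add_mono mult_right_mono less_imp_le)
    finally show ?thesis
      using \<epsilon>M by simp
  qed
  then have "cmod (w a * \<alpha> - w b * \<beta>) \<le> 0"
    by (rule field_le_epsilon)
  then show ?thesis
    by simp
qed

lemma op_apply_row_factor:
  "op_apply (\<lambda>a b. c a * K (g a) b) u a = c a * op_apply K u (g a)"
  unfolding op_apply_def by (simp add: mult.assoc infsum_cmult_right')

lemma cnj_psiD [simp]: "cnj (psiD D p) = psiD D p"
  by (cases p) (simp add: psiD_def)

lemma psiD_diag_sq: "psiD D (x, x) * psiD D (x, x) = pmf D x"
  by (simp add: psiD_def of_real_mult[symmetric])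

lemma infsum_psiD_psiD:
  "(\<Sum>\<^sub>\<infinity>(e, u). psiD D (x, e) * psiD D (x', e) * g u) = rhoD D x x' * (\<Sum>\<^sub>\<infinity>u. g u)"
proof -
  have "(\<Sum>\<^sub>\<infinity>(e, u). psiD D (x, e) * psiD D (x', e) * g u)
      = infsum (\<lambda>(e, u). psiD D (x, e) * psiD D (x', e) * g u) (range (Pair x))"
    by (rule infsum_cong_neutral) (auto simp: psiD_def)
  also have "\<dots> = (\<Sum>\<^sub>\<infinity>u. psiD D (x, x) * psiD D (x', x) * g u)"
    by (subst infsum_reindex) (auto simp: o_def inj_def)
  also have "\<dots> = rhoD D x x' * (\<Sum>\<^sub>\<infinity>u. g u)"
    by (cases "x' = x") (simp_all add: infsum_cmult_right' rhoD_def psiD_diag_sq, simp add: psiD_def)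
  finally show ?thesis .
qed

lemma pmf_pos_witness:
  obtains x where "0 < pmf D x"
  using set_pmf_not_empty[of D] by (auto simp: set_pmf_eq order.strict_iff_order)

lemma pred_ext_distr_iff:
  fixes D :: "'t pmf" and w :: "((('r \<times> 't) \<times> 't) \<times> 'u) \<Rightarrow> complex"
  assumes "0 < pmf D x0"
  shows "w \<in> pred_ext_U (distr D) \<longleftrightarrow> is_l2 w \<and>
    (\<forall>r x e u. w (((r, x), e), u) * psiD D (x0, x0) = w (((r, x0), x0), u) * psiD D (x, e))"
proof (intro iffI conjI allI; (elim conjE)?)
  assume w: "w \<in> pred_ext_U (distr D)"
  then show "is_l2 w"
    unfolding pred_ext_U_def by simp
  fix r x e u
  obtain \<phi> where "\<And>r x e. w (((r, x), e), u) = \<phi> r * psiD D (x, e)"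
    using w unfolding pred_ext_U_def distr_def by blast
  then show "w (((r, x), e), u) * psiD D (x0, x0) = w (((r, x0), x0), u) * psiD D (x, e)"
    by simp
next
  assume w: "is_l2 w"
    and rel: "\<forall>r x e u. w (((r, x), e), u) * psiD D (x0, x0) = w (((r, x0), x0), u) * psiD D (x, e)"
  have \<alpha>: "psiD D (x0, x0) \<noteq> 0"
    using assms by (simp add: psiD_def)
  have "(\<lambda>z. w (z, u)) \<in> distr D" for u
  proof -
    define j where "j r = (((r, x0), x0), u)" for r :: 'r
    have "inj j"
      by (simp add: inj_def j_def)
    then have "is_l2 (\<lambda>r. (w \<circ> j) r * (1 / psiD D (x0, x0)))"
      using w by (intro is_l2_mult_const is_l2_comp_inj)
    moreover have "w (((r, x), e), u) = (w \<circ> j) r * (1 / psiD D (x0, x0)) * psiD D (x, e)" for r x e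
      using rel \<alpha> by (simp add: j_def field_simps)
    ultimately show ?thesis
      unfolding distr_def by blast
  qed
  with w show "w \<in> pred_ext_U (distr D)"
    unfolding pred_ext_U_def by blast
qed

section \<open>From satisfaction to product form\<close>

lemma distr_supported_entry:
  fixes \<rho>c :: "((('r \<times> 't) \<times> 't) \<times> 'u) \<Rightarrow> ((('r \<times> 't) \<times> 't) \<times> 'u) \<Rightarrow> complex"
  assumes "mixed \<rho>c" "supp \<rho>c \<subseteq> pred_ext_U (distr D)" "0 < pmf D x0"
  shows "\<rho>c (((r, x), e), u) (((r', x'), e'), u') * pmf D x0
    = psiD D (x, e) * psiD D (x', e') * \<rho>c (((r, x0), x0), u) (((r', x0), x0), u')"
proof -
  let ?\<alpha> = "psiD D (x0, x0)"
  have column: "\<rho>c (((r, x), e), u) b * ?\<alpha> = \<rho>c (((r, x0), x0), u) b * psiD D (x, e)" for r x e u b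
  proof -
    have "(\<lambda>a. \<rho>c a b) \<in> pred_ext_U (distr D)"
      using assms(2) column_in_supp[OF assms(1)] by blast
    then show ?thesis
      unfolding pred_ext_distr_iff[OF assms(3)] by blast
  qed
  have row: "\<rho>c a (((r', x'), e'), u') * ?\<alpha> = \<rho>c a (((r', x0), x0), u') * psiD D (x', e')" for a
  proof -
    have "\<rho>c a (((r', x'), e'), u') * ?\<alpha> = cnj (\<rho>c (((r', x'), e'), u') a * ?\<alpha>)"
      by (simp add: mixed_hermitian[OF assms(1), of a "(((r', x'), e'), u')"])
    also have "\<dots> = cnj (\<rho>c (((r', x0), x0), u') a * psiD D (x', e'))"
      by (simp only: column)
    also have "\<dots> = \<rho>c a (((r', x0), x0), u') * psiD D (x', e')"
      by (simp add: mixed_hermitian[OF assms(1), of a "(((r', x0), x0), u')"])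
    finally show ?thesis .
  qed
  have "\<rho>c (((r, x), e), u) (((r', x'), e'), u') * (?\<alpha> * ?\<alpha>)
      = (\<rho>c (((r, x), e), u) (((r', x'), e'), u') * ?\<alpha>) * ?\<alpha>"
    by (simp only: mult.assoc)
  also have "\<dots> = (\<rho>c (((r, x0), x0), u) (((r', x'), e'), u') * ?\<alpha>) * psiD D (x, e)"
    by (simp only: column[of r x e u "(((r', x'), e'), u')"] mult.assoc mult.commute[of "psiD D (x, e)"])
  also have "\<dots> = psiD D (x, e) * psiD D (x', e') * \<rho>c (((r, x0), x0), u) (((r', x0), x0), u')"
    unfolding row[of "(((r, x0), x0), u)"] by (simp only: ac_simps)
  finally show ?thesis
    by (simp only: psiD_diag_sq)
qed

lemma ptrace_distr_supported:
  fixes \<rho>c :: "((('r \<times> 't) \<times> 't) \<times> 'u) \<Rightarrow> ((('r \<times> 't) \<times> 't) \<times> 'u) \<Rightarrow> complex"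
  assumes "mixed \<rho>c" "supp \<rho>c \<subseteq> pred_ext_U (distr D)" "0 < pmf D x0"
  shows "ptrace_EU \<rho>c (r, x) (r', x') * pmf D x0 = rhoD D x x' * ptrace_EU \<rho>c (r, x0) (r', x0)"
proof -
  define H where "H = (\<Sum>\<^sub>\<infinity>u. \<rho>c (((r, x0), x0), u) (((r', x0), x0), u))"
  have trace: "ptrace_EU \<rho>c (r, x) (r', x') * pmf D x0 = rhoD D x x' * H" for x x'
  proof -
    have "ptrace_EU \<rho>c (r, x) (r', x') * pmf D x0
        = (\<Sum>\<^sub>\<infinity>p. (case p of (e, u) \<Rightarrow> \<rho>c (((r, x), e), u) (((r', x'), e), u)) * pmf D x0)"
      unfolding ptrace_EU_def by (rule infsum_cmult_left'[symmetric])
    also have "\<dots> = (\<Sum>\<^sub>\<infinity>(e, u). psiD D (x, e) * psiD D (x', e) * \<rho>c (((r, x0), x0), u) (((r', x0), x0), u))"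
      using distr_supported_entry[OF assms] by (simp add: case_prod_unfold)
    also have "\<dots> = rhoD D x x' * H"
      unfolding H_def by (rule infsum_psiD_psiD)
    finally show ?thesis .
  qed
  have "ptrace_EU \<rho>c (r, x0) (r', x0) = H"
    using trace[of x0 x0] assms(3) by (simp add: rhoD_def)
  then show ?thesis
    using trace by simp
qed

lemma models_distr_imp_tensor:
  fixes D :: "'t pmf" and \<rho> :: "('r \<times> 't) \<Rightarrow> ('r \<times> 't) \<Rightarrow> complex"
  assumes "mixed \<rho>" "models TYPE('u) \<rho> (distr D)"
  shows "\<exists>\<rho>'. mixed \<rho>' \<and> \<rho> = tensor_op \<rho>' (rhoD D)"
proof -
  obtain \<rho>c :: "((('r \<times> 't) \<times> 't) \<times> 'u) \<Rightarrow> ((('r \<times> 't) \<times> 't) \<times> 'u) \<Rightarrow> complex"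
    where \<rho>c: "mixed \<rho>c" "supp \<rho>c \<subseteq> pred_ext_U (distr D)" and trace: "ptrace_EU \<rho>c = \<rho>"
    using assms(2) unfolding models_def by blast
  obtain x0 where x0: "0 < pmf D x0"
    by (rule pmf_pos_witness)
  define \<rho>' where "\<rho>' r r' = of_real (1 / pmf D x0) * \<rho> (r, x0) (r', x0)" for r r'
  have "mixed \<rho>'"
    unfolding \<rho>'_def using x0 assms(1)
    by (intro mixed_scale mixed_comp_inj[where j = "\<lambda>r. (r, x0)", simplified]) (auto simp: inj_def)
  moreover have "\<rho> = tensor_op \<rho>' (rhoD D)"
  proof (intro ext)
    fix p q :: "'r \<times> 't"
    show "\<rho> p q = tensor_op \<rho>' (rhoD D) p q"
      using ptrace_distr_supported[OF \<rho>c x0, of "fst p" "snd p" "fst q" "snd q"] x0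
      by (simp add: trace tensor_op_def \<rho>'_def field_simps)
  qed
  ultimately show ?thesis
    by blast
qed

section \<open>From product form to satisfaction\<close>

text \<open>\<open>(\<rho>' \<otimes> |\<psi>\<^sub>D\<rangle>\<langle>\<psi>\<^sub>D|) \<otimes> |u\<^sub>0\<rangle>\<langle>u\<^sub>0|\<close>, reassociated to the layout \<open>((r, x), e), u\<close>;
  the ghost value \<open>u\<^sub>0 = undefined\<close> is arbitrary.\<close>

definition purification ::
    "('r \<Rightarrow> 'r \<Rightarrow> complex) \<Rightarrow> 't pmf \<Rightarrow> ((('r \<times> 't) \<times> 't) \<times> 'u) \<Rightarrow> ((('r \<times> 't) \<times> 't) \<times> 'u) \<Rightarrow> complex"
  where "purification \<rho>' D = tensor_op
    (\<lambda>z z'. tensor_op \<rho>' (selfbutter (psiD D)) ((\<lambda>((r, x), e). (r, x, e)) z) ((\<lambda>((r, x), e). (r, x, e)) z'))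
    (selfbutter (indicator {undefined}))"

lemma purification_entry:
  "purification \<rho>' D (((r, x), e), u) (((r', x'), e'), u')
    = psiD D (x, e) * indicator {undefined} u * (\<rho>' r r' * psiD D (x', e') * indicator {undefined} u')"
  by (simp add: purification_def tensor_op_def selfbutter_def indicator_def)

lemma
  assumes "mixed \<rho>'"
  shows mixed_purification: "mixed (purification \<rho>' D)"
    and separable_purification: "separable (purification \<rho>' D)"
proof -
  have point: "is_l2 (indicator {undefined} :: 'u \<Rightarrow> complex)"
    by (rule is_l2_finite_support) (simp add: indicator_def)
  have "inj (\<lambda>((r :: 'r, x :: 't), e :: 't). (r, x, e))"
    by (auto simp: inj_def)
  then have "mixed (\<lambda>z z'. tensor_op \<rho>' (selfbutter (psiD D))
      ((\<lambda>((r, x), e). (r, x, e)) z) ((\<lambda>((r, x), e). (r, x, e)) z'))"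
    by (rule mixed_comp_inj[OF _ mixed_tensor_selfbutter[OF assms is_l2_psiD]])
  then show "mixed (purification \<rho>' D)" "separable (purification \<rho>' D)"
    unfolding purification_def using point mixed_selfbutter[OF point]
    by (auto intro: mixed_tensor_selfbutter separable_tensor_op)
qed

lemma ptrace_purification:
  fixes \<rho>' :: "'r \<Rightarrow> 'r \<Rightarrow> complex" and D :: "'t pmf"
  shows "ptrace_EU (purification \<rho>' D :: ((('r \<times> 't) \<times> 't) \<times> 'u) \<Rightarrow> _) = tensor_op \<rho>' (rhoD D)"
proof (intro ext)
  let ?\<rho>c = "purification \<rho>' D :: ((('r \<times> 't) \<times> 't) \<times> 'u) \<Rightarrow> _"
  let ?g = "\<lambda>r r' (u :: 'u). \<rho>' r r' * indicator {undefined} u * indicator {undefined} u"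
  fix p q :: "'r \<times> 't"
  obtain r x r' x' where pq: "p = (r, x)" "q = (r', x')"
    by fastforce
  have "ptrace_EU ?\<rho>c (r, x) (r', x') = (\<Sum>\<^sub>\<infinity>(e, u). psiD D (x, e) * psiD D (x', e) * ?g r r' u)"
    unfolding ptrace_EU_def by (simp add: purification_entry ac_simps)
  also have "\<dots> = rhoD D x x' * infsum (?g r r') UNIV"
    by (rule infsum_psiD_psiD)
  also have "infsum (?g r r') UNIV = \<rho>' r r'"
    by (subst infsum_cong_neutral[where T = "{undefined}"]) auto
  finally show "ptrace_EU ?\<rho>c p q = tensor_op \<rho>' (rhoD D) p q"
    by (simp add: pq tensor_op_def mult.commute)
qed

lemma supp_purification:
  fixes \<rho>' :: "'r \<Rightarrow> 'r \<Rightarrow> complex"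
  assumes "mixed \<rho>'"
  shows "supp (purification \<rho>' D :: ((('r \<times> 't) \<times> 't) \<times> 'u) \<Rightarrow> _) \<subseteq> pred_ext_U (distr D)"
proof
  let ?\<rho>c = "purification \<rho>' D :: ((('r \<times> 't) \<times> 't) \<times> 'u) \<Rightarrow> _"
  fix w assume w: "w \<in> supp ?\<rho>c"
  obtain x0 where x0: "0 < pmf D x0"
    by (rule pmf_pos_witness)
  define c :: "((('r \<times> 't) \<times> 't) \<times> 'u) \<Rightarrow> complex"
    where "c = (\<lambda>(((r, x), e), u). psiD D (x, e) * indicator {undefined} u)"
  define K :: "'r \<Rightarrow> ((('r \<times> 't) \<times> 't) \<times> 'u) \<Rightarrow> complex" where "K r b = (case b of (((r', x'), e'), u') \<Rightarrow>
    \<rho>' r r' * psiD D (x', e') * indicator {undefined} u')" for r b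
  have rows: "?\<rho>c = (\<lambda>a b. c a * K (fst (fst (fst a))) b)"
    by (intro ext) (auto simp: purification_entry c_def K_def split: prod.splits)
  have range_rel: "m (((r, x), e), u) * psiD D (x0, x0) = m (((r, x0), x0), u) * psiD D (x, e)"
    if range: "m \<in> op_range ?\<rho>c" for m r x e u
  proof -
    obtain v where m: "m = op_apply ?\<rho>c v"
      using range unfolding op_range_def by blast
    have "m a = c a * op_apply K v (fst (fst (fst a)))" for a
      unfolding m rows by (rule op_apply_row_factor)
    then show ?thesis
      by (simp add: c_def ac_simps)
  qed
  have "w (((r, x), e), u) * psiD D (x0, x0) = w (((r, x0), x0), u) * psiD D (x, e)" for r x e u
    by (rule supp_preserves_relation[OF mixed_purification[OF assms] w range_rel])
  moreover have "is_l2 w"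
    using w unfolding supp_def by simp
  ultimately show "w \<in> pred_ext_U (distr D)"
    using pred_ext_distr_iff[OF x0] by blast
qed

lemma tensor_imp_models_distr:
  fixes D :: "'t pmf" and \<rho>' :: "'r \<Rightarrow> 'r \<Rightarrow> complex"
  assumes "mixed \<rho>'"
  shows "models TYPE('u) (tensor_op \<rho>' (rhoD D)) (distr D)"
  unfolding models_def
  using mixed_purification[OF assms] separable_purification[OF assms] supp_purification[OF assms]
    ptrace_purification
  by blast

theorem lemma4:
  fixes D :: "'t pmf"
    and \<rho> :: "('r \<times> 't) \<Rightarrow> ('r \<times> 't) \<Rightarrow> complex"
  assumes "mixed \<rho>"
  shows "models TYPE('u) \<rho> (distr D) \<longleftrightarrow>
           (\<exists>\<rho>' :: 'r \<Rightarrow> 'r \<Rightarrow> complex. mixed \<rho>' \<and> \<rho> = tensor_op \<rho>' (rhoD D))"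
  using models_distr_imp_tensor[OF assms] tensor_imp_models_distr by blast

end
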